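(* Consider either (a) the maxface obtained from a reflexive symmetric zigzag of genus $p$, or (b) the maxface obtained from a reflexive symmetric tweezer of genus $p$ whose data satisfy $t_{-j}=-t_j$ for all $j$. Write, on the sheet over the upper half-plane, $g=\frac{e^{\pm i\pi/4}}{c}\prod_{j=-p}^p(z-t_j)^{a_j}$, $dh=c\,dz$, let $G(z)=\frac1{c^2}\prod_{j=-p}^p(z-t_j)^{2a_j}$ and $A(z)=\frac{g'(z)}{c\,g(z)}$. Suppose $G'\neq0$ on every loop $C_k$ of the singular set. Then on each such loop $C_k$: (1) there are at least two points $z$ with $\mathrm{Re}\,A(z)=0$ and $\mathrm{Im}\,A(z)\neq0$; (2) there are at least two points $z$ with $\mathrm{Re}\,A(z)\neq0$ and $\mathrm{Im}\,A(z)=0$.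
   Context: The region is the image of the closed upper half-plane under a Schwarz–Christoffel map $F(z)=\int_i^z\prod_{j=-p}^p(t-t_j)^{a_j}dt$ with real $t_{-p}<\dots<t_p$ mapped to the vertices $P_{-p},\dots,P_p$ and $a_j\in\{\pm\frac12\}$. Zigzag of genus $p$: open properly embedded arc in $\mathbb{C}$ of alternating horizontal/vertical segments with $2p+1$ vertices, angles $\pi/2,3\pi/2,\dots,\pi/2$ between consecutive sides, symmetric about $y=x$; for it the $a_j$ alternate in sign starting at $a_{-p}=-\frac12$ and $t_{-j}=-t_j$. Tweezer of genus $p\ge2$: arc of alternating horizontal/vertical edges with vertices $P_{-p},\dots,P_p$ whose interior angles (on the left going from $P_p$ to $P_{-p}$) alternate $3\pi/2,\pi/2$ except that they equal $\pi/2$ at $P_{\pm1}$ and, at $P_0$, $\pi/2$ if $p$ even and $3\pi/2$ if $p$ odd, symmetric about $y=-x$; the exponents $a_j$ correspond to these angles (angle $(a_j+1)\pi$). Reflexive: there is a conformal map from the upper half-plane model of one complementary region to that of the other sending vertex $P_j$ to $P_{-j}$. In each case the maxface lives on the hyperelliptic double cover of the doubled region branched at the $t_j$ and $\infty$, with Weierstrass data $(g,dh)$ as in the claim on one sheet and extended by symmetry, $c$ a nonzero constant; its singular set is $\{|g|=1\}$, whose connected components are called loops $C_k$. *)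

theory Defs
  imports "HOL-Complex_Analysis.Complex_Analysis"
begin

text \<open>Indices j range over {-p..p}. The exponent a_j is encoded as e j / 2 with e j in {1,-1}.\<close>

definition idx :: "nat \<Rightarrow> int set" where
  "idx p = {- int p .. int p}"

text \<open>Schwarz-Christoffel integrand (principal branches, continuous on the closed upper half-plane)
  and the map F(z) = integral from i to z (along the segment).\<close>

definition SC_f :: "nat \<Rightarrow> (int \<Rightarrow> real) \<Rightarrow> (int \<Rightarrow> int) \<Rightarrow> complex \<Rightarrow> complex" where
  "SC_f p t e z = (\<Prod>j\<in>idx p. (z - of_real (t j)) powr (of_int (e j) / 2))"

definition SC_F :: "nat \<Rightarrow> (int \<Rightarrow> real) \<Rightarrow> (int \<Rightarrow> int) \<Rightarrow> complex \<Rightarrow> complex" where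
  "SC_F p t e z = contour_integral (linepath \<i> z) (SC_f p t e)"

definition prevertices_ok :: "nat \<Rightarrow> (int \<Rightarrow> real) \<Rightarrow> bool" where
  "prevertices_ok p t \<longleftrightarrow>
     (\<forall>i\<in>idx p. \<forall>j\<in>idx p. i < j \<longrightarrow> t i < t j) \<and> (\<forall>j\<in>idx p. t (- j) = - t j)"

text \<open>The boundary arc F(R) is, after a similarity x \<mapsto> alpha x + beta, an open properly embedded
  arc whose sides are horizontal or vertical, symmetric about the line y = x (sigma = 1)
  or y = -x (sigma = -1); the reflection in y = sigma x is z \<mapsto> sigma i conj z.\<close>

definition rect_arc_sym :: "nat \<Rightarrow> (int \<Rightarrow> real) \<Rightarrow> (int \<Rightarrow> int) \<Rightarrow> complex \<Rightarrow> bool" where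
  "rect_arc_sym p t e \<sigma> \<longleftrightarrow>
     (\<exists>\<alpha> \<beta>. \<alpha> \<noteq> 0 \<and>
        (let P = (\<lambda>x::real. \<alpha> * SC_F p t e (of_real x) + \<beta>) in
           inj P \<and> continuous_on UNIV P \<and>
           filterlim (\<lambda>x. norm (P x)) at_top at_top \<and>
           filterlim (\<lambda>x. norm (P x)) at_top at_bot \<and>
           (\<forall>x. x \<notin> t ` idx p \<longrightarrow>
               Re (\<alpha> * SC_f p t e (of_real x)) = 0 \<or> Im (\<alpha> * SC_f p t e (of_real x)) = 0) \<and>
           (\<forall>x. \<exists>y. P y = \<sigma> * \<i> * cnj (P x))))"

text \<open>Reflexivity: a conformal bijection from the region F(open UHP) onto the other complementary
  region of the arc, extending continuously to the boundary and sending P_j to P_{-j}.\<close>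

definition reflexive :: "nat \<Rightarrow> (int \<Rightarrow> real) \<Rightarrow> (int \<Rightarrow> int) \<Rightarrow> bool" where
  "reflexive p t e \<longleftrightarrow>
     (let R1 = SC_F p t e ` {z. Im z > 0};
          R2 = - (SC_F p t e ` {z. Im z \<ge> 0}) in
      \<exists>\<phi>. \<phi> holomorphic_on R1 \<and> bij_betw \<phi> R1 R2 \<and> continuous_on (closure R1) \<phi> \<and>
          (\<forall>j\<in>idx p. \<phi> (SC_F p t e (of_real (t j))) = SC_F p t e (of_real (t (- j)))))"

text \<open>Exponents: zigzag a_j alternate starting with a_{-p} = -1/2.
  Tweezer: angle 3pi/2 (a = 1/2) / pi/2 (a = -1/2) alternating from P_p (3pi/2),
  except pi/2 at P_{\<plusminus>1}, and at P_0: pi/2 if p even, 3pi/2 if p odd.\<close>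

definition zigzag_exp :: "nat \<Rightarrow> int \<Rightarrow> int" where
  "zigzag_exp p j = (if even (j + int p) then -1 else 1)"

definition tweezer_exp :: "nat \<Rightarrow> int \<Rightarrow> int" where
  "tweezer_exp p j =
     (if j = 0 then (if even p then -1 else 1)
      else if \<bar>j\<bar> = 1 then -1
      else if even (int p - j) then 1 else -1)"

definition reflexive_symmetric_zigzag :: "nat \<Rightarrow> (int \<Rightarrow> real) \<Rightarrow> (int \<Rightarrow> int) \<Rightarrow> bool" where
  "reflexive_symmetric_zigzag p t e \<longleftrightarrow>
     (\<forall>j\<in>idx p. e j = zigzag_exp p j) \<and> prevertices_ok p t \<and>
     rect_arc_sym p t e 1 \<and> reflexive p t e"

definition reflexive_symmetric_tweezer :: "nat \<Rightarrow> (int \<Rightarrow> real) \<Rightarrow> (int \<Rightarrow> int) \<Rightarrow> bool" where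
  "reflexive_symmetric_tweezer p t e \<longleftrightarrow>
     p \<ge> 2 \<and> (\<forall>j\<in>idx p. e j = tweezer_exp p j) \<and> prevertices_ok p t \<and>
     rect_arc_sym p t e (-1) \<and> reflexive p t e"

text \<open>G(z) = c^{-2} prod (z - t_j)^{2 a_j} and A(z) = g'(z)/(c g(z)) = c^{-1} sum a_j/(z - t_j).\<close>

definition Gfun :: "nat \<Rightarrow> (int \<Rightarrow> real) \<Rightarrow> (int \<Rightarrow> int) \<Rightarrow> complex \<Rightarrow> complex \<Rightarrow> complex" where
  "Gfun p t e c z = (1 / c^2) * (\<Prod>j\<in>idx p. (z - of_real (t j)) powi (e j))"

definition Afun :: "nat \<Rightarrow> (int \<Rightarrow> real) \<Rightarrow> (int \<Rightarrow> int) \<Rightarrow> complex \<Rightarrow> complex \<Rightarrow> complex" where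
  "Afun p t e c z = (1 / c) * (\<Sum>j\<in>idx p. (of_int (e j) / 2) / (z - of_real (t j)))"

text \<open>Singular set {|g| = 1} = {|G| = 1} (|g|^2 = |G|), in the z-coordinate; loops are its
  connected components.\<close>

definition sing_set :: "nat \<Rightarrow> (int \<Rightarrow> real) \<Rightarrow> (int \<Rightarrow> int) \<Rightarrow> complex \<Rightarrow> complex set" where
  "sing_set p t e c = {z. z \<notin> of_real ` t ` idx p \<and> cmod (Gfun p t e c z) = 1}"

end

theory Submission
  imports Defs
begin

text \<open>The singular set is the level set |G| = 1 of G, which is holomorphic off the prevertices with
  logarithmic derivative G'/G = 2cA. The exponents of G are \<plusminus>1 and there is an odd number of
  them, so |G| tends to 0 or \<infinity> at infinity and at every prevertex: the level set is compact, and
  where G' \<noteq> 0 it is a smooth curve with tangent i G/G' = i/(2cA). On a loop, a linear function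
  Re (\<omega> z) attains its maximum and its minimum, and there the tangent is orthogonal to \<omega>; if
  maximum and minimum coincide, the loop lies on a line and every point qualifies. Choosing \<omega> so
  that this orthogonality reads Re (1/A) = 0, resp. Im (1/A) = 0, gives the two pairs of points.\<close>

lemma holomorphic_local_preimage_of_circle:
  fixes G :: "complex \<Rightarrow> complex"
  assumes U: "open U" and hol: "G holomorphic_on U" and z0: "z0 \<in> U" and dG0: "deriv G z0 \<noteq> 0"
  obtains \<epsilon> \<gamma> where "0 < \<epsilon>" "\<epsilon> < pi" "\<gamma> 0 = z0" "continuous_on {-\<epsilon><..<\<epsilon>} \<gamma>"
    "\<And>s. \<bar>s\<bar> < \<epsilon> \<Longrightarrow> \<gamma> s \<in> U \<and> G (\<gamma> s) = G z0 * exp (\<i> * of_real s)"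
    "(\<gamma> has_vector_derivative (\<i> * G z0 / deriv G z0)) (at 0)"
proof -
  obtain r where r: "r > 0" "ball z0 r \<subseteq> U" "open (G ` ball z0 r)" "inj_on G (ball z0 r)"
    using has_complex_derivative_locally_invertible[OF hol z0 U dG0] by blast
  define V where "V = G ` ball z0 r"
  define w0 where "w0 = G z0"
  obtain g where g: "g holomorphic_on V"
    "\<And>z. z \<in> ball z0 r \<Longrightarrow> deriv G z * deriv g (G z) = 1"
    "\<And>z. z \<in> ball z0 r \<Longrightarrow> g (G z) = z"
    using holomorphic_has_inverse[OF holomorphic_on_subset[OF hol r(2)] open_ball r(4)]
    unfolding V_def by blast
  have z0B: "z0 \<in> ball z0 r" using r by simp
  have w0V: "w0 \<in> V" unfolding V_def w0_def using z0B by blast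
  have gV: "g w \<in> ball z0 r" "G (g w) = w" if "w \<in> V" for w
    using that g(3) unfolding V_def by auto
  have "((\<lambda>s::real. w0 * exp (\<i> * of_real s)) \<longlongrightarrow> w0) (at 0)"
    by (rule tendsto_eq_intros refl | simp)+
  then have "\<forall>\<^sub>F s in at 0. w0 * exp (\<i> * of_real s) \<in> V"
    using topological_tendstoD r(3) w0V unfolding V_def by blast
  then obtain d where d: "d > 0" "\<And>s. s \<noteq> 0 \<Longrightarrow> \<bar>s\<bar> < d \<Longrightarrow> w0 * exp (\<i> * of_real s) \<in> V"
    unfolding eventually_at by auto
  define \<epsilon> where "\<epsilon> = min d 1"
  have \<epsilon>: "0 < \<epsilon>" "\<epsilon> < pi"
    using d(1) pi_gt3 by (auto simp: \<epsilon>_def)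
  have inV: "w0 * exp (\<i> * of_real s) \<in> V" if "\<bar>s\<bar> < \<epsilon>" for s
    using d that w0V by (cases "s = 0") (auto simp: \<epsilon>_def)
  define \<gamma> where "\<gamma> s = g (w0 * exp (\<i> * of_real s))" for s :: real
  have \<gamma>0: "\<gamma> 0 = z0" unfolding \<gamma>_def w0_def using g(3) z0B by simp
  have cont: "continuous_on {-\<epsilon><..<\<epsilon>} \<gamma>"
    unfolding \<gamma>_def
    by (rule continuous_on_compose2[OF holomorphic_on_imp_continuous_on[OF g(1)]])
       (auto intro!: continuous_intros inV)
  have circle: "\<gamma> s \<in> U \<and> G (\<gamma> s) = G z0 * exp (\<i> * of_real s)" if "\<bar>s\<bar> < \<epsilon>" for s
    using gV[OF inV[OF that]] r(2) unfolding \<gamma>_def w0_def by blast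
  have "(g has_field_derivative deriv g w0) (at w0)"
    using holomorphic_derivI[OF g(1) _ w0V] r(3) unfolding V_def by blast
  moreover have "((\<lambda>\<zeta>. w0 * exp (\<i> * \<zeta>)) has_field_derivative w0 * \<i>) (at (of_real 0))"
    by (auto intro!: derivative_eq_intros)
  ultimately have "((\<lambda>\<zeta>. g (w0 * exp (\<i> * \<zeta>))) has_field_derivative deriv g w0 * (w0 * \<i>))
      (at (of_real 0))"
    using DERIV_chain2[of g] by simp
  moreover have "deriv g w0 * (w0 * \<i>) = \<i> * G z0 / deriv G z0"
    using g(2)[OF z0B] dG0 by (simp add: w0_def field_simps)
  ultimately have "(\<gamma> has_vector_derivative \<i> * G z0 / deriv G z0) (at 0)"
    using has_vector_derivative_real_field unfolding \<gamma>_def by fastforce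
  then show ?thesis
    using that \<epsilon> \<gamma>0 cont circle by blast
qed

lemma level_set_local_arc:
  fixes G :: "complex \<Rightarrow> complex"
  assumes U: "open U" and hol: "G holomorphic_on U" and z0: "z0 \<in> U"
    and G0: "G z0 \<noteq> 0" and dG0: "deriv G z0 \<noteq> 0"
  obtains \<epsilon> \<gamma> where "\<epsilon> > 0" "\<gamma> 0 = z0"
    "\<And>s. \<bar>s\<bar> < \<epsilon> \<Longrightarrow> \<gamma> s \<in> connected_component_set {z\<in>U. cmod (G z) = cmod (G z0)} z0"
    "\<And>s. 0 < \<bar>s\<bar> \<Longrightarrow> \<bar>s\<bar> < \<epsilon> \<Longrightarrow> \<gamma> s \<noteq> z0"
    "(\<gamma> has_vector_derivative (\<i> * G z0 / deriv G z0)) (at 0)"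
proof -
  obtain \<epsilon> :: real and \<gamma> where \<epsilon>: "0 < \<epsilon>" "\<epsilon> < pi" and \<gamma>0: "\<gamma> 0 = z0"
    and cont: "continuous_on {-\<epsilon><..<\<epsilon>} \<gamma>"
    and circle: "\<And>s. \<bar>s\<bar> < \<epsilon> \<Longrightarrow> \<gamma> s \<in> U \<and> G (\<gamma> s) = G z0 * exp (\<i> * of_real s)"
    and d\<gamma>: "(\<gamma> has_vector_derivative (\<i> * G z0 / deriv G z0)) (at 0)"
    by (rule holomorphic_local_preimage_of_circle[OF U hol z0 dG0]) (rule that)
  have "connected (\<gamma> ` {-\<epsilon><..<\<epsilon>})"
    by (rule connected_continuous_image[OF cont connected_Ioo])
  moreover have "\<gamma> ` {-\<epsilon><..<\<epsilon>} \<subseteq> {z\<in>U. cmod (G z) = cmod (G z0)}"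
    using circle by (auto simp: norm_mult abs_less_iff)
  moreover have "z0 \<in> \<gamma> ` {-\<epsilon><..<\<epsilon>}"
    using \<gamma>0 \<epsilon> by force
  ultimately have arc: "\<gamma> ` {-\<epsilon><..<\<epsilon>} \<subseteq> connected_component_set {z\<in>U. cmod (G z) = cmod (G z0)} z0"
    by (intro connected_component_maximal)
  have "\<gamma> s \<in> connected_component_set {z\<in>U. cmod (G z) = cmod (G z0)} z0" if "\<bar>s\<bar> < \<epsilon>" for s
    using that by (intro subsetD[OF arc]) (auto simp: abs_less_iff)
  moreover have "\<gamma> s \<noteq> z0" if "0 < \<bar>s\<bar>" "\<bar>s\<bar> < \<epsilon>" for s
  proof
    assume "\<gamma> s = z0"
    then have "exp (\<i> * of_real s) = 1"
      using circle[OF that(2)] G0 by simp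
    from arg_cong[where f = Im, OF this] have "sin s = 0"
      by (simp add: Im_exp)
    then show False
      using sin_eq_0_pi[of s] that \<epsilon> by auto
  qed
  ultimately show ?thesis
    using that \<epsilon>(1) \<gamma>0 d\<gamma> by blast
qed

lemma level_set_tangent_at_extremum:
  fixes G :: "complex \<Rightarrow> complex"
  assumes U: "open U" and hol: "G holomorphic_on U" and z0: "z0 \<in> U"
    and G0: "G z0 \<noteq> 0" and dG0: "deriv G z0 \<noteq> 0"
    and max: "\<And>z. z \<in> connected_component_set {z\<in>U. cmod (G z) = cmod (G z0)} z0 \<Longrightarrow>
                Re (\<omega> * z) \<le> Re (\<omega> * z0)"
  shows "Re (\<omega> * (\<i> * G z0 / deriv G z0)) = 0"
proof -
  obtain \<epsilon> :: real and \<gamma> where \<epsilon>: "\<epsilon> > 0" and \<gamma>0: "\<gamma> 0 = z0"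
    and \<gamma>K: "\<And>s. \<bar>s\<bar> < \<epsilon> \<Longrightarrow> \<gamma> s \<in> connected_component_set {z\<in>U. cmod (G z) = cmod (G z0)} z0"
    and "\<And>s. 0 < \<bar>s\<bar> \<Longrightarrow> \<bar>s\<bar> < \<epsilon> \<Longrightarrow> \<gamma> s \<noteq> z0"
    and d\<gamma>: "(\<gamma> has_vector_derivative (\<i> * G z0 / deriv G z0)) (at 0)"
    by (rule level_set_local_arc[OF U hol z0 G0 dG0]) (rule that)
  have "((\<lambda>s. Re (\<omega> * \<gamma> s)) has_field_derivative Re (\<omega> * (\<i> * G z0 / deriv G z0))) (at 0)"
    by (intro has_field_derivative_Re has_vector_derivative_mult_right d\<gamma>)
  moreover have "\<forall>s. \<bar>0 - s\<bar> < \<epsilon> \<longrightarrow> Re (\<omega> * \<gamma> s) \<le> Re (\<omega> * \<gamma> 0)"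
    using max \<gamma>K \<gamma>0 by simp
  ultimately show ?thesis
    by (rule DERIV_local_max[OF _ \<epsilon>])
qed

lemma level_set_component_not_singleton:
  fixes G :: "complex \<Rightarrow> complex"
  assumes "open U" "G holomorphic_on U" "z0 \<in> U" "G z0 \<noteq> 0" "deriv G z0 \<noteq> 0"
  obtains z1 where "z1 \<in> connected_component_set {z\<in>U. cmod (G z) = cmod (G z0)} z0" "z1 \<noteq> z0"
proof -
  obtain \<epsilon> :: real and \<gamma> where "\<epsilon> > 0" "\<gamma> 0 = z0"
    "\<And>s. \<bar>s\<bar> < \<epsilon> \<Longrightarrow> \<gamma> s \<in> connected_component_set {z\<in>U. cmod (G z) = cmod (G z0)} z0"
    "\<And>s. 0 < \<bar>s\<bar> \<Longrightarrow> \<bar>s\<bar> < \<epsilon> \<Longrightarrow> \<gamma> s \<noteq> z0"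
    "(\<gamma> has_vector_derivative (\<i> * G z0 / deriv G z0)) (at 0)"
    by (rule level_set_local_arc[OF assms]) (rule that)
  then show ?thesis
    using that[of "\<gamma> (\<epsilon> / 2)"] by simp
qed

lemma compact_connected_component:
  fixes S :: "'a::t2_space set"
  assumes "compact S"
  shows "compact (connected_component_set S x)"
  using compact_Int_closed[OF assms closed_connected_component[OF compact_imp_closed[OF assms]], of x]
  by (simp add: Int_absorb1 connected_component_subset)

lemma level_set_component_two_tangent_points:
  fixes G :: "complex \<Rightarrow> complex"
  assumes U: "open U" and hol: "G holomorphic_on U" and r: "r > 0"
    and cpt: "compact {z\<in>U. cmod (G z) = r}"
    and dG: "\<And>z. z \<in> U \<Longrightarrow> cmod (G z) = r \<Longrightarrow> deriv G z \<noteq> 0"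
    and z0: "z0 \<in> U" "cmod (G z0) = r"
  obtains z1 z2 where "z1 \<noteq> z2"
    "z1 \<in> connected_component_set {z\<in>U. cmod (G z) = r} z0"
    "z2 \<in> connected_component_set {z\<in>U. cmod (G z) = r} z0"
    "Re (\<omega> * (\<i> * G z1 / deriv G z1)) = 0" "Re (\<omega> * (\<i> * G z2 / deriv G z2)) = 0"
proof -
  define K where "K = connected_component_set {z\<in>U. cmod (G z) = r} z0"
  have K_level: "z \<in> U" "G z \<noteq> 0" "deriv G z \<noteq> 0" if "z \<in> K" for z
    using that connected_component_subset dG r unfolding K_def by fastforce+
  have K_eq: "connected_component_set {y\<in>U. cmod (G y) = cmod (G z)} z = K" if "z \<in> K" for z
    using connected_component_eq[OF that[unfolded K_def]] connected_component_subset that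
    unfolding K_def by fastforce
  have extremal: "Re (w * (\<i> * G z / deriv G z)) = 0"
    if "z \<in> K" "\<And>y. y \<in> K \<Longrightarrow> Re (w * y) \<le> Re (w * z)" for z w
    by (rule level_set_tangent_at_extremum[OF U hol K_level[OF that(1)]])
       (use that K_eq[OF that(1)] in simp)
  have "compact K"
    unfolding K_def by (rule compact_connected_component[OF cpt])
  moreover have "K \<noteq> {}"
    unfolding K_def connected_component_eq_empty using z0 by simp
  moreover have "continuous_on K (\<lambda>z. Re (w * z))" for w
    by (intro continuous_intros)
  ultimately have "\<exists>a\<in>K. \<forall>z\<in>K. Re (w * z) \<le> Re (w * a)" for w
    by (rule continuous_attains_sup)
  then obtain a b where a: "a \<in> K" "\<And>z. z \<in> K \<Longrightarrow> Re (\<omega> * z) \<le> Re (\<omega> * a)"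
    and b: "b \<in> K" "\<And>z. z \<in> K \<Longrightarrow> Re (- \<omega> * z) \<le> Re (- \<omega> * b)"
    by meson
  show ?thesis
  proof (cases "a = b")
    case False
    have "Re (\<omega> * (\<i> * G a / deriv G a)) = 0" "Re (- \<omega> * (\<i> * G b / deriv G b)) = 0"
      using extremal a b by blast+
    then show ?thesis
      using that False a(1) b(1) unfolding K_def by simp
  next
    case True
    then have flat: "Re (\<omega> * (\<i> * G z / deriv G z)) = 0" if "z \<in> K" for z
      using extremal[OF that] a(2) b(2)[OF that] by force
    obtain a' where "a' \<in> K" "a' \<noteq> a"
      using level_set_component_not_singleton[OF U hol K_level[OF a(1)]] K_eq[OF a(1)] by blast
    then show ?thesis
      using that[of a' a] a(1) flat unfolding K_def by blast
  qed
qed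

lemma has_field_derivative_prod_power_int:
  fixes a :: "'i \<Rightarrow> 'a::real_normed_field" and n :: "'i \<Rightarrow> int"
  assumes "finite I" "\<And>j. j \<in> I \<Longrightarrow> z \<noteq> a j"
  shows "((\<lambda>z. \<Prod>j\<in>I. (z - a j) powi n j) has_field_derivative
           (\<Prod>j\<in>I. (z - a j) powi n j) * (\<Sum>j\<in>I. of_int (n j) / (z - a j))) (at z)"
  using assms
proof (induction I rule: finite_induct)
  case empty
  then show ?case by simp
next
  case (insert i I)
  have zi: "z - a i \<noteq> 0" using insert.prems by auto
  have "((\<lambda>z. (z - a i) powi n i) has_field_derivative of_int (n i) * (z - a i) powi (n i - 1) * 1) (at z)"
    using zi by (intro DERIV_power_int derivative_eq_intros) auto
  moreover have "(z - a i) powi (n i - 1) = (z - a i) powi n i / (z - a i)"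
    using zi by (simp add: power_int_diff)
  moreover have "((\<lambda>z. \<Prod>j\<in>I. (z - a j) powi n j) has_field_derivative
           (\<Prod>j\<in>I. (z - a j) powi n j) * (\<Sum>j\<in>I. of_int (n j) / (z - a j))) (at z)"
    using insert by auto
  ultimately show ?case
    using DERIV_mult insert(1,2) zi by (fastforce simp: field_simps)
qed

lemma prod_power_int_sign_split:
  fixes f :: "'i \<Rightarrow> 'a::field"
  assumes "finite I" "\<And>j. j \<in> I \<Longrightarrow> e j = 1 \<or> e j = -1"
  shows "(\<Prod>j\<in>I. f j powi e j) = (\<Prod>j\<in>{j\<in>I. e j = 1}. f j) / (\<Prod>j\<in>{j\<in>I. e j = -1}. f j)"
proof -
  have I: "I = {j\<in>I. e j = 1} \<union> {j\<in>I. e j = -1}" using assms(2) by auto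
  have "(\<Prod>j\<in>I. f j powi e j)
        = (\<Prod>j\<in>{j\<in>I. e j = 1}. f j powi e j) * (\<Prod>j\<in>{j\<in>I. e j = -1}. f j powi e j)"
    by (subst I, rule prod.union_disjoint) (use assms(1) in auto)
  also have "\<dots> = (\<Prod>j\<in>{j\<in>I. e j = 1}. f j) * (\<Prod>j\<in>{j\<in>I. e j = -1}. inverse (f j))"
    by (intro arg_cong2[where f = "(*)"] prod.cong) (auto simp: power_int_minus1_right)
  also have "\<dots> = (\<Prod>j\<in>{j\<in>I. e j = 1}. f j) * inverse (\<Prod>j\<in>{j\<in>I. e j = -1}. f j)"
    using prod_inversef[of f] by (simp add: o_def)
  finally show ?thesis
    by (simp add: divide_inverse)
qed

lemma norm_prod_diff_bounds:
  fixes a :: "'i \<Rightarrow> 'a::real_normed_field"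
  assumes "\<And>j. j \<in> A \<Longrightarrow> norm (a j) \<le> norm z / 2"
  shows "(norm z / 2) ^ card A \<le> norm (\<Prod>j\<in>A. z - a j)"
    and "norm (\<Prod>j\<in>A. z - a j) \<le> (2 * norm z) ^ card A"
proof -
  have factor: "norm z / 2 \<le> norm (z - a j)" "norm (z - a j) \<le> 2 * norm z" if "j \<in> A" for j
    using assms[OF that] norm_triangle_ineq2[of z "a j"] norm_triangle_ineq4[of z "a j"] by auto
  show "(norm z / 2) ^ card A \<le> norm (\<Prod>j\<in>A. z - a j)"
    using prod_mono[of A "\<lambda>_. norm z / 2" "\<lambda>j. norm (z - a j)"] factor(1)
    by (simp add: prod_norm)
  show "norm (\<Prod>j\<in>A. z - a j) \<le> (2 * norm z) ^ card A"
    using prod_mono[of A "\<lambda>j. norm (z - a j)" "\<lambda>_. 2 * norm z"] factor(2)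
    by (simp add: prod_norm)
qed

lemma le_of_power_le_mult_power:
  fixes x k :: real and m n :: nat
  assumes x: "x \<ge> 1" and nm: "n < m" and k: "k > 0"
    and le: "(x / 2) ^ m \<le> k * (2 * x) ^ n"
  shows "x \<le> k * 2 ^ (m + n)"
proof -
  have "x * x ^ n \<le> x ^ (m - n) * x ^ n"
    using x nm by (intro mult_right_mono) (auto intro: order_trans[OF _ power_increasing[of 1]])
  also have "\<dots> = (x / 2) ^ m * 2 ^ m"
    using nm by (simp add: power_add[symmetric] power_divide)
  also have "\<dots> \<le> k * (2 * x) ^ n * 2 ^ m"
    using le by (simp add: mult_right_mono)
  also have "\<dots> = (k * 2 ^ (m + n)) * x ^ n"
    by (simp add: power_mult_distrib power_add)
  finally show ?thesis
    using x by simp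
qed

lemma bounded_prod_norm_level_set_card_less:
  fixes a :: "'i \<Rightarrow> 'a::real_normed_field"
  assumes fin: "finite A" "finite B" and card: "card B < card A" and k: "k > 0"
  shows "bounded {z. norm (\<Prod>j\<in>A. z - a j) = k * norm (\<Prod>j\<in>B. z - a j)}"
proof -
  define M where "M = (\<Sum>j\<in>A \<union> B. norm (a j)) + 1"
  have aM: "norm (a j) \<le> M - 1" if "j \<in> A \<union> B" for j
    using member_le_sum[OF that, of "\<lambda>j. norm (a j)"] fin by (simp add: M_def)
  have M1: "M \<ge> 1" unfolding M_def by (simp add: sum_nonneg)
  show ?thesis
    unfolding bounded_iff
  proof (intro exI ballI)
    fix z assume z: "z \<in> {z. norm (\<Prod>j\<in>A. z - a j) = k * norm (\<Prod>j\<in>B. z - a j)}"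
    show "norm z \<le> max (2 * M) (k * 2 ^ (card A + card B))"
    proof (cases "norm z \<le> 2 * M")
      case False
      then have small: "norm (a j) \<le> norm z / 2" if "j \<in> A \<union> B" for j
        using aM[OF that] by simp
      have "(norm z / 2) ^ card A \<le> norm (\<Prod>j\<in>A. z - a j)"
        by (rule norm_prod_diff_bounds(1)) (use small in auto)
      also have "\<dots> \<le> k * (2 * norm z) ^ card B"
        using z k norm_prod_diff_bounds(2)[of B a z] small by auto
      finally have "norm z \<le> k * 2 ^ (card A + card B)"
        using le_of_power_le_mult_power False M1 card k by simp
      then show ?thesis by simp
    qed simp
  qed
qed

lemma bounded_prod_norm_level_set:
  fixes a :: "'i \<Rightarrow> 'a::real_normed_field"
  assumes "finite A" "finite B" "card A \<noteq> card B" "k > 0"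
  shows "bounded {z. norm (\<Prod>j\<in>A. z - a j) = k * norm (\<Prod>j\<in>B. z - a j)}"
proof (cases "card B < card A")
  case True
  then show ?thesis using bounded_prod_norm_level_set_card_less assms by blast
next
  case False
  then have "bounded {z. norm (\<Prod>j\<in>B. z - a j) = inverse k * norm (\<Prod>j\<in>A. z - a j)}"
    using bounded_prod_norm_level_set_card_less[of B A "inverse k" a] assms by simp
  moreover have "{z. norm (\<Prod>j\<in>B. z - a j) = inverse k * norm (\<Prod>j\<in>A. z - a j)}
      = {z. norm (\<Prod>j\<in>A. z - a j) = k * norm (\<Prod>j\<in>B. z - a j)}"
    using assms(4) by (auto simp: field_simps)
  ultimately show ?thesis
    by simp
qed

lemma nonzero_imaginary_iff_Re_inverse: "Re z = 0 \<and> Im z \<noteq> 0 \<longleftrightarrow> z \<noteq> 0 \<and> Re (inverse z) = 0"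
  by (cases "z = 0") (auto simp: complex_eq_iff sum_power2_eq_zero_iff)

lemma nonzero_real_iff_Im_inverse: "Re z \<noteq> 0 \<and> Im z = 0 \<longleftrightarrow> z \<noteq> 0 \<and> Im (inverse z) = 0"
  by (cases "z = 0") (auto simp: complex_eq_iff sum_power2_eq_zero_iff)

lemma prevertices_ok_inj_on: "prevertices_ok p t \<Longrightarrow> inj_on t (idx p)"
  unfolding prevertices_ok_def by (intro strict_mono_on_imp_inj_on) (auto simp: strict_mono_on_def)

lemma zigzag_or_tweezer_prevertices_ok:
  "reflexive_symmetric_zigzag p t e \<or> reflexive_symmetric_tweezer p t e \<Longrightarrow> prevertices_ok p t"
  unfolding reflexive_symmetric_zigzag_def reflexive_symmetric_tweezer_def by auto

lemma zigzag_or_tweezer_exponent: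
  assumes "reflexive_symmetric_zigzag p t e \<or> reflexive_symmetric_tweezer p t e"
  shows "\<forall>j\<in>idx p. e j = 1 \<or> e j = -1"
proof -
  have "zigzag_exp p j = 1 \<or> zigzag_exp p j = -1" "tweezer_exp p j = 1 \<or> tweezer_exp p j = -1" for j
    by (auto simp: zigzag_exp_def tweezer_exp_def)
  then show ?thesis
    using assms unfolding reflexive_symmetric_zigzag_def reflexive_symmetric_tweezer_def by metis
qed

lemma Gfun_has_field_derivative:
  assumes "z \<notin> of_real ` t ` idx p"
  shows "(Gfun p t e c has_field_derivative Gfun p t e c z * (2 * c * Afun p t e c z)) (at z)"
proof -
  have "((\<lambda>z. \<Prod>j\<in>idx p. (z - of_real (t j)) powi e j) has_field_derivative
          (\<Prod>j\<in>idx p. (z - of_real (t j)) powi e j) * (\<Sum>j\<in>idx p. of_int (e j) / (z - of_real (t j))))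
        (at z)"
    by (rule has_field_derivative_prod_power_int) (use assms in \<open>auto simp: idx_def\<close>)
  then have "(Gfun p t e c has_field_derivative
      Gfun p t e c z * (\<Sum>j\<in>idx p. of_int (e j) / (z - of_real (t j)))) (at z)"
    unfolding Gfun_def using DERIV_cmult[of _ _ z UNIV "1 / c^2"] by (simp add: mult.assoc)
  moreover have "Gfun p t e c z * (\<Sum>j\<in>idx p. of_int (e j) / (z - of_real (t j)))
      = Gfun p t e c z * (2 * c * Afun p t e c z)"
  proof (cases "c = 0")
    case False
    have "(\<Sum>j\<in>idx p. of_int (e j) / 2 / (z - of_real (t j)))
        = (\<Sum>j\<in>idx p. of_int (e j) / (z - of_real (t j))) / 2"
      unfolding sum_divide_distrib by (simp add: divide_divide_eq_left mult.commute)
    then show ?thesis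
      using False by (simp add: Afun_def mult.commute)
  qed (simp add: Gfun_def) \<comment> \<open>for c = 0, G vanishes identically since 1/0 = 0\<close>
  ultimately show ?thesis
    by simp
qed

text \<open>Since each a_j = \<plusminus>1/2, |G| = 1 is a polynomial equation; at a prevertex exactly one side
  vanishes, so the prevertices drop out automatically.\<close>

lemma sing_set_eq_prod_level_set:
  assumes E: "\<forall>j\<in>idx p. e j = 1 \<or> e j = -1"
    and inj: "inj_on t (idx p)" and c: "c \<noteq> 0"
  shows "sing_set p t e c =
    {z. cmod (\<Prod>j\<in>{j\<in>idx p. e j = 1}. z - of_real (t j))
          = cmod c ^ 2 * cmod (\<Prod>j\<in>{j\<in>idx p. e j = -1}. z - of_real (t j))}"
    (is "_ = {z. cmod (?P z) = cmod c ^ 2 * cmod (?Q z)}")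
proof -
  have fin: "finite (idx p)" by (simp add: idx_def)
  have "(\<Prod>j\<in>idx p. (z - of_real (t j)) powi e j) = ?P z / ?Q z" for z
    by (rule prod_power_int_sign_split[OF fin]) (use E in blast)
  then have G: "Gfun p t e c z = ?P z / ?Q z / c^2" for z
    by (simp add: Gfun_def)
  have P0: "?P z = 0 \<longleftrightarrow> (\<exists>j\<in>idx p. e j = 1 \<and> z = of_real (t j))"
   and Q0: "?Q z = 0 \<longleftrightarrow> (\<exists>j\<in>idx p. e j = -1 \<and> z = of_real (t j))" for z
    using fin by (auto simp: prod_zero_iff)
  have "z \<in> sing_set p t e c \<longleftrightarrow> cmod (?P z) = cmod c ^ 2 * cmod (?Q z)" for z
  proof (cases "z \<in> of_real ` t ` idx p")
    case True
    then obtain k where k: "k \<in> idx p" "z = of_real (t k)" by blast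
    have "?P z = 0 \<longleftrightarrow> e k = 1" "?Q z = 0 \<longleftrightarrow> e k = -1"
      unfolding P0 Q0 using k inj by (auto dest: inj_onD)
    then have "cmod (?P z) \<noteq> cmod c ^ 2 * cmod (?Q z)"
      using E k(1) c by auto
    then show ?thesis using True by (simp add: sing_set_def)
  next
    case False
    then have "?Q z \<noteq> 0" using Q0 by blast
    then show ?thesis
      using False c by (auto simp: sing_set_def G norm_divide norm_mult norm_power field_simps)
  qed
  then show ?thesis by blast
qed

lemma compact_sing_set:
  assumes E: "\<forall>j\<in>idx p. e j = 1 \<or> e j = -1"
    and inj: "inj_on t (idx p)" and c: "c \<noteq> 0"
  shows "compact (sing_set p t e c)"
proof -
  have fin: "finite (idx p)" by (simp add: idx_def)
  define Jp where "Jp = {j\<in>idx p. e j = 1}"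
  define Jm where "Jm = {j\<in>idx p. e j = -1}"
  have "idx p = Jp \<union> Jm" "Jp \<inter> Jm = {}"
    using E by (auto simp: Jp_def Jm_def)
  then have "card Jp + card Jm = card (idx p)"
    using card_Un_disjoint[of Jp Jm] fin by (metis finite_Un)
  also have "\<dots> = 2 * p + 1"
    by (simp add: idx_def)
  finally have "card Jp + card Jm = 2 * p + 1" .
  then have card: "card {j\<in>idx p. e j = 1} \<noteq> card {j\<in>idx p. e j = -1}"
    unfolding Jp_def Jm_def by presburger
  have "bounded {z. cmod (\<Prod>j\<in>{j\<in>idx p. e j = 1}. z - of_real (t j))
                  = cmod c ^ 2 * cmod (\<Prod>j\<in>{j\<in>idx p. e j = -1}. z - of_real (t j))}"
    using card fin c by (intro bounded_prod_norm_level_set) auto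
  moreover have "closed {z. cmod (\<Prod>j\<in>{j\<in>idx p. e j = 1}. z - of_real (t j))
                  = cmod c ^ 2 * cmod (\<Prod>j\<in>{j\<in>idx p. e j = -1}. z - of_real (t j))}"
    by (intro closed_Collect_eq continuous_intros)
  ultimately show ?thesis
    using sing_set_eq_prod_level_set[OF E inj c] by (simp add: compact_eq_bounded_closed)
qed

text \<open>Since i G/G' = i/(2cA), the direction -2ic\<omega> is orthogonal to the tangent of the singular
  set exactly where Re (\<omega>/A) = 0.\<close>

lemma sing_set_component_two_points:
  assumes data: "reflexive_symmetric_zigzag p t e \<or> reflexive_symmetric_tweezer p t e"
    and c: "c \<noteq> 0"
    and G'_nz: "\<forall>z\<in>sing_set p t e c. deriv (Gfun p t e c) z \<noteq> 0"
    and z0: "z0 \<in> sing_set p t e c"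
  obtains z1 z2 where "z1 \<noteq> z2"
    "z1 \<in> connected_component_set (sing_set p t e c) z0"
    "z2 \<in> connected_component_set (sing_set p t e c) z0"
    "Afun p t e c z1 \<noteq> 0" "Re (\<omega> * inverse (Afun p t e c z1)) = 0"
    "Afun p t e c z2 \<noteq> 0" "Re (\<omega> * inverse (Afun p t e c z2)) = 0"
proof -
  let ?U = "- (of_real ` t ` idx p) :: complex set"
  let ?G = "Gfun p t e c" and ?A = "Afun p t e c"
  have S: "sing_set p t e c = {z\<in>?U. cmod (?G z) = 1}"
    by (auto simp: sing_set_def)
  have U: "open ?U"
    by (intro open_Compl finite_imp_closed) (simp add: idx_def)
  have DG: "(?G has_field_derivative ?G z * (2 * c * ?A z)) (at z)" if "z \<in> ?U" for z
    using Gfun_has_field_derivative that by simp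
  then have hol: "?G holomorphic_on ?U"
    using U by (auto simp: holomorphic_on_open field_differentiable_def)
  have E: "\<forall>j\<in>idx p. e j = 1 \<or> e j = -1"
    by (rule zigzag_or_tweezer_exponent[OF data])
  have inj: "inj_on t (idx p)"
    by (rule prevertices_ok_inj_on[OF zigzag_or_tweezer_prevertices_ok[OF data]])
  have cpt: "compact {z\<in>?U. cmod (?G z) = 1}"
    using compact_sing_set[OF E inj c] by (simp only: S)
  have dG: "deriv ?G z \<noteq> 0" if "z \<in> ?U" "cmod (?G z) = 1" for z
    using G'_nz that by (simp add: sing_set_def)
  have tangent: "?A z \<noteq> 0 \<and> (- 2 * \<i> * c * \<omega>) * (\<i> * ?G z / deriv ?G z) = \<omega> * inverse (?A z)"
    if "z \<in> ?U" "cmod (?G z) = 1" for z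
  proof -
    have "deriv ?G z = ?G z * (2 * c * ?A z)"
      using DERIV_imp_deriv[OF DG[OF that(1)]] .
    moreover have "?G z \<noteq> 0"
      using that(2) by auto
    ultimately show ?thesis
      using dG[OF that] c by (simp add: field_simps)
  qed
  have z0': "z0 \<in> ?U" "cmod (?G z0) = 1"
    using z0 unfolding S by auto
  obtain z1 z2 where z12: "z1 \<noteq> z2"
    "z1 \<in> connected_component_set {z\<in>?U. cmod (?G z) = 1} z0"
    "z2 \<in> connected_component_set {z\<in>?U. cmod (?G z) = 1} z0"
    "Re ((- 2 * \<i> * c * \<omega>) * (\<i> * ?G z1 / deriv ?G z1)) = 0"
    "Re ((- 2 * \<i> * c * \<omega>) * (\<i> * ?G z2 / deriv ?G z2)) = 0"
    by (rule level_set_component_two_tangent_points[OF U hol zero_less_one cpt dG z0'])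
  have "z1 \<in> ?U" "cmod (?G z1) = 1" "z2 \<in> ?U" "cmod (?G z2) = 1"
    using z12(2,3) connected_component_subset by blast+
  then show ?thesis
    using that[of z1 z2] z12 tangent unfolding S by metis
qed

theorem proposition7p2:
  fixes p :: nat and t :: "int \<Rightarrow> real" and e :: "int \<Rightarrow> int" and c :: complex
  assumes data: "reflexive_symmetric_zigzag p t e \<or> reflexive_symmetric_tweezer p t e"
    and c: "c \<noteq> 0"
    and G'_nz: "\<forall>z\<in>sing_set p t e c. deriv (Gfun p t e c) z \<noteq> 0"
  shows "\<forall>z0\<in>sing_set p t e c.
           (\<exists>z1 z2. z1 \<noteq> z2 \<and>
              z1 \<in> connected_component_set (sing_set p t e c) z0 \<and>
              z2 \<in> connected_component_set (sing_set p t e c) z0 \<and>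
              Re (Afun p t e c z1) = 0 \<and> Im (Afun p t e c z1) \<noteq> 0 \<and>
              Re (Afun p t e c z2) = 0 \<and> Im (Afun p t e c z2) \<noteq> 0) \<and>
           (\<exists>z1 z2. z1 \<noteq> z2 \<and>
              z1 \<in> connected_component_set (sing_set p t e c) z0 \<and>
              z2 \<in> connected_component_set (sing_set p t e c) z0 \<and>
              Re (Afun p t e c z1) \<noteq> 0 \<and> Im (Afun p t e c z1) = 0 \<and>
              Re (Afun p t e c z2) \<noteq> 0 \<and> Im (Afun p t e c z2) = 0)"
proof (intro ballI conjI)
  fix z0 assume "z0 \<in> sing_set p t e c"
  note two_points = sing_set_component_two_points[OF data c G'_nz this]
  show "\<exists>z1 z2. z1 \<noteq> z2 \<and>
          z1 \<in> connected_component_set (sing_set p t e c) z0 \<and>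
          z2 \<in> connected_component_set (sing_set p t e c) z0 \<and>
          Re (Afun p t e c z1) = 0 \<and> Im (Afun p t e c z1) \<noteq> 0 \<and>
          Re (Afun p t e c z2) = 0 \<and> Im (Afun p t e c z2) \<noteq> 0"
    by (rule two_points[of 1]) (use nonzero_imaginary_iff_Re_inverse in auto)
  show "\<exists>z1 z2. z1 \<noteq> z2 \<and>
          z1 \<in> connected_component_set (sing_set p t e c) z0 \<and>
          z2 \<in> connected_component_set (sing_set p t e c) z0 \<and>
          Re (Afun p t e c z1) \<noteq> 0 \<and> Im (Afun p t e c z1) = 0 \<and>
          Re (Afun p t e c z2) \<noteq> 0 \<and> Im (Afun p t e c z2) = 0"
    by (rule two_points[of "- \<i>"]) (use nonzero_real_iff_Im_inverse in auto)
qed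

end
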